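(* Let $d\ge1$, $\emptyset\ne H\subset\mathbb{R}^d$, $R>0$, and let $x,y\in\mathbb{R}^d$ with $d(x,H)\ge R$ and $d(y,H)\ge R$. Then for every $0\le\Delta\le R$, $$d(T_\Delta x,T_\Delta y)\ge\frac{R-\Delta}{R}\,d(x,y).$$
   Context: $d(\cdot,\cdot)$ is Euclidean distance and $d(x,H)=\inf_{z\in H}|x-z|$. Let $\bar H$ be the closure of $H$; for each $x$ let $\pi(x)\in\bar H$ be a point with $|x-\pi(x)|=d(x,H)$ (any one if several). For $\Delta\ge0$, $T_\Delta x:=x+\Delta\frac{\pi(x)-x}{|\pi(x)-x|}$ if $d(x,H)>\Delta$ and $T_\Delta x:=\pi(x)$ if $d(x,H)\le\Delta$. *)

theory Defs
  imports "HOL-Analysis.Analysis"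
begin

definition is_nearest_point_map :: "'a::euclidean_space set \<Rightarrow> ('a \<Rightarrow> 'a) \<Rightarrow> bool" where
  "is_nearest_point_map H proj \<longleftrightarrow>
     (\<forall>x. proj x \<in> closure H \<and> dist x (proj x) = infdist x H)"

definition T_step :: "'a::euclidean_space set \<Rightarrow> ('a \<Rightarrow> 'a) \<Rightarrow> real \<Rightarrow> 'a \<Rightarrow> 'a" where
  "T_step H proj \<Delta> x =
     (if infdist x H > \<Delta>
      then x + \<Delta> *\<^sub>R ((proj x - x) /\<^sub>R norm (proj x - x))
      else proj x)"

end

theory Submission
  imports Defs
begin

text \<open>Write \<open>u, v\<close> for the unit vectors from \<open>x, y\<close> towards their nearest points
  \<open>p = x + a u\<close>, \<open>q = y + b v\<close>, where \<open>a, b \<ge> R\<close> are the distances to \<open>H\<close>; then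
  \<open>T\<^sub>\<Delta> x - T\<^sub>\<Delta> y = w + \<Delta> (u - v)\<close> with \<open>w = x - y\<close>. Since \<open>q\<close> is no closer to \<open>x\<close>
  than \<open>p\<close>, and \<open>p\<close> no closer to \<open>y\<close> than \<open>q\<close>, expanding the two squared distances gives
  \<open>\<langle>w, u - v\<rangle> \<ge> -|w|\<^sup>2 (a + b) / (2ab) \<ge> -|w|\<^sup>2 / R\<close>. Hence
  \<open>\<langle>w, w + \<Delta> (u - v)\<rangle> \<ge> (1 - \<Delta>/R) |w|\<^sup>2\<close>, and Cauchy-Schwarz finishes the proof.\<close>

lemma infdist_le_dist_closure:
  assumes "H \<noteq> {}" and "h \<in> closure H"
  shows "infdist x H \<le> dist x h"
proof -
  have "infdist h H = 0"
    using assms in_closure_iff_infdist_zero by blast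
  then show ?thesis
    using infdist_triangle[of x H h] by simp
qed

lemma inner_diff_unit_ge:
  fixes w u v :: "'a::real_inner"
  assumes "norm u = 1" and "norm v = 1" and "R > 0" and "R \<le> a" and "R \<le> b"
    and far_x: "a \<le> norm (w - b *\<^sub>R v)" and far_y: "b \<le> norm (w + a *\<^sub>R u)"
  shows "- (norm w)\<^sup>2 / R \<le> inner w (u - v)"
proof -
  define W where "W = (norm w)\<^sup>2"
  have a: "a > 0" and b: "b > 0"
    using \<open>R > 0\<close> \<open>R \<le> a\<close> \<open>R \<le> b\<close> by linarith+
  have "a\<^sup>2 \<le> (norm (w - b *\<^sub>R v))\<^sup>2"
    using far_x a by (simp add: power_mono)
  also have "\<dots> = W - 2 * b * inner w v + b\<^sup>2"
    using assms(2) unfolding W_def power2_norm_eq_inner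
    by (simp add: inner_diff inner_commute[of v w] norm_eq_1 algebra_simps power2_eq_square)
  finally have inner_v: "inner w v \<le> (W + b\<^sup>2 - a\<^sup>2) / (2 * b)"
    using b by (simp add: field_simps)
  have "b\<^sup>2 \<le> (norm (w + a *\<^sub>R u))\<^sup>2"
    using far_y b by (simp add: power_mono)
  also have "\<dots> = W + 2 * a * inner w u + a\<^sup>2"
    using assms(1) unfolding W_def power2_norm_eq_inner
    by (simp add: inner_add inner_commute[of u w] norm_eq_1 algebra_simps power2_eq_square)
  finally have inner_u: "(b\<^sup>2 - a\<^sup>2 - W) / (2 * a) \<le> inner w u"
    using a by (simp add: field_simps)
  have "(a + b) / (2 * a * b) \<le> 1 / R"
  proof -
    have "R * a \<le> b * a" "R * b \<le> a * b"
      using \<open>R \<le> a\<close> \<open>R \<le> b\<close> a b by (simp_all add: mult_right_mono)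
    then have "(a + b) * R \<le> 2 * a * b"
      by (simp add: algebra_simps)
    then show ?thesis
      using a b \<open>R > 0\<close> by (simp add: divide_simps)
  qed
  from mult_left_mono[OF this, of W] have "- W / R \<le> - W * ((a + b) / (2 * a * b))"
    by (simp add: W_def)
  also have "\<dots> \<le> ((b - a)\<^sup>2 * (a + b) - W * (a + b)) / (2 * a * b)"
    using a b by (simp add: field_simps)
  also have "\<dots> = (b\<^sup>2 - a\<^sup>2 - W) / (2 * a) - (W + b\<^sup>2 - a\<^sup>2) / (2 * b)"
    using a b by (simp add: field_simps power2_eq_square)
  also have "\<dots> \<le> inner w (u - v)"
    unfolding inner_diff_right using inner_u inner_v by linarith
  finally show ?thesis
    by (simp add: W_def)
qed

lemma norm_add_scaleR_ge:
  fixes w z :: "'a::real_inner"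
  assumes "R > 0" and "0 \<le> \<Delta>" and "- (norm w)\<^sup>2 / R \<le> inner w z"
  shows "(R - \<Delta>) / R * norm w \<le> norm (w + \<Delta> *\<^sub>R z)"
proof (cases "w = 0")
  case False
  have "\<Delta> * (- (norm w)\<^sup>2 / R) \<le> \<Delta> * inner w z"
    using mult_left_mono[OF assms(3,2)] .
  then have "(R - \<Delta>) / R * (norm w)\<^sup>2 \<le> inner w (w + \<Delta> *\<^sub>R z)"
    using assms(1) by (simp add: inner_add_right power2_norm_eq_inner field_simps)
  also have "\<dots> \<le> norm w * norm (w + \<Delta> *\<^sub>R z)"
    by (rule norm_cauchy_schwarz)
  finally have "norm w * ((R - \<Delta>) / R * norm w) \<le> norm w * norm (w + \<Delta> *\<^sub>R z)"
    by (simp add: power2_eq_square algebra_simps)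
  then show ?thesis
    by (rule mult_left_le_imp_le) (simp add: False)
qed simp

text \<open>Both branches of \<open>T_step\<close> agree here: when \<open>infdist x H = \<Delta>\<close>, the nearest point
  \<open>proj x\<close> is exactly \<open>\<Delta>\<close> away from \<open>x\<close> in the direction used by the first branch.\<close>

lemma T_step_eq:
  assumes "is_nearest_point_map H proj" and "0 < infdist x H" and "\<Delta> \<le> infdist x H"
  shows "T_step H proj \<Delta> x = x + \<Delta> *\<^sub>R ((proj x - x) /\<^sub>R infdist x H)"
proof -
  have norm_eq: "norm (proj x - x) = infdist x H"
    using assms(1) by (simp add: is_nearest_point_map_def dist_norm norm_minus_commute)
  have "proj x = x + infdist x H *\<^sub>R ((proj x - x) /\<^sub>R infdist x H)"
    using assms(2) by simp
  then show ?thesis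
    using assms(3) by (auto simp: T_step_def norm_eq)
qed

theorem proposition1:
  fixes H :: "'a::euclidean_space set" and proj :: "'a \<Rightarrow> 'a"
    and x y :: 'a and R \<Delta> :: real
  assumes "H \<noteq> {}"
    and "is_nearest_point_map H proj"
    and "R > 0"
    and "infdist x H \<ge> R" and "infdist y H \<ge> R"
    and "0 \<le> \<Delta>" and "\<Delta> \<le> R"
  shows "dist (T_step H proj \<Delta> x) (T_step H proj \<Delta> y) \<ge> (R - \<Delta>) / R * dist x y"
proof -
  define a b where "a = infdist x H" and "b = infdist y H"
  define u v where "u = (proj x - x) /\<^sub>R a" and "v = (proj y - y) /\<^sub>R b"
  have "a > 0" "b > 0" using assms by (auto simp: a_def b_def)
  have proj_x: "proj x = x + a *\<^sub>R u" and proj_y: "proj y = y + b *\<^sub>R v"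
    using \<open>a > 0\<close> \<open>b > 0\<close> by (simp_all add: u_def v_def)
  have "norm u = 1" "norm v = 1"
    using assms(2) \<open>a > 0\<close> \<open>b > 0\<close>
    by (simp_all add: u_def v_def a_def b_def is_nearest_point_map_def dist_norm norm_minus_commute)
  moreover have "a \<le> norm ((x - y) - b *\<^sub>R v)" "b \<le> norm ((x - y) + a *\<^sub>R u)"
  proof -
    have "proj x \<in> closure H" "proj y \<in> closure H"
      using assms(2) by (simp_all add: is_nearest_point_map_def)
    then have "a \<le> dist x (proj y)" "b \<le> dist y (proj x)"
      using infdist_le_dist_closure[OF assms(1)] by (simp_all add: a_def b_def)
    then show "a \<le> norm ((x - y) - b *\<^sub>R v)" "b \<le> norm ((x - y) + a *\<^sub>R u)"
      by (simp_all add: proj_x proj_y dist_norm norm_minus_commute[of y] algebra_simps)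
  qed
  ultimately have "- (norm (x - y))\<^sup>2 / R \<le> inner (x - y) (u - v)"
    using assms(3-5) by (intro inner_diff_unit_ge) (auto simp: a_def b_def)
  then have "(R - \<Delta>) / R * norm (x - y) \<le> norm ((x - y) + \<Delta> *\<^sub>R (u - v))"
    by (rule norm_add_scaleR_ge[OF assms(3,6)])
  moreover have "T_step H proj \<Delta> x - T_step H proj \<Delta> y = (x - y) + \<Delta> *\<^sub>R (u - v)"
    using assms \<open>a > 0\<close> \<open>b > 0\<close>
    by (simp add: T_step_eq u_def v_def a_def b_def algebra_simps)
  ultimately show ?thesis
    by (simp add: dist_norm)
qed

end
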